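(* Let $\phi\in T_m(\mathbb{R}^d)$ be a conjugation invariant homogeneous of degree $m$. Then $\phi=\operatorname{shift}_m(\phi)$.
   Context: $T_m(\mathbb{R}^d)=(\mathbb{R}^d)^{\otimes m}$ has basis the words of length $m$ over $\{1,\dots,d\}$. $\operatorname{shift}_m$ is the linear automorphism of $T_m$ with $\operatorname{shift}_m(w_1\cdots w_m)=w_m w_1\cdots w_{m-1}$. A path is a piecewise smooth $X:[0,1]\to\mathbb{R}^d$ with iterated-integrals signature $S(X)\in T((\mathbb{R}^d))$ ($\langle S(X),\mathsf e\rangle=1$, $\langle S(X),wi\rangle=\int_0^1\langle S(X|_{[0,t]}),w\rangle dX^i(t)$, where $\langle\sum_w c_w w,v\rangle=c_v$). $\sqcup$ is concatenation, $B^{-1}$ the reversed path. $\phi$ is a conjugation invariant if $\langle S(A),\phi\rangle=\langle S(B\sqcup A\sqcup B^{-1}),\phi\rangle$ for all paths $A,B$. *)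

theory Defs
  imports "HOL-Analysis.Analysis"
begin

text \<open>Paths X : [0,1] -> R^d are functions real => real^'n with d = CARD('n);
  words over {1..d} are lists over 'n.\<close>

definition piecewise_smooth_path :: "(real \<Rightarrow> real^'n) \<Rightarrow> bool" where
  "piecewise_smooth_path X \<longleftrightarrow> X piecewise_C1_differentiable_on {0..1}"

text \<open>Iterated integrals, indexed by the reversed word:
  sig_rev X (i # ws) t = integral_0^t sig_rev X ws s dX^i(s).\<close>
fun sig_rev :: "(real \<Rightarrow> real^'n) \<Rightarrow> 'n list \<Rightarrow> real \<Rightarrow> real" where
  "sig_rev X [] t = 1"
| "sig_rev X (i # ws) t =
     integral {0..t} (\<lambda>s. sig_rev X ws s * (vector_derivative X (at s)) $ i)"

definition sig_coeff :: "(real \<Rightarrow> real^'n) \<Rightarrow> 'n list \<Rightarrow> real" where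
  "sig_coeff X w = sig_rev X (rev w) 1"

definition in_Tm :: "nat \<Rightarrow> ('n list \<Rightarrow> real) \<Rightarrow> bool" where
  "in_Tm m \<phi> \<longleftrightarrow> (\<forall>w. length w \<noteq> m \<longrightarrow> \<phi> w = 0)"

definition sig_pair :: "nat \<Rightarrow> (real \<Rightarrow> real^'n::finite) \<Rightarrow> ('n list \<Rightarrow> real) \<Rightarrow> real" where
  "sig_pair m X \<phi> = (\<Sum>w\<in>{w::'n list. length w = m}. sig_coeff X w * \<phi> w)"

text \<open>shift_m(w_1...w_m) = w_m w_1 ... w_{m-1}, extended linearly; hence the
  coefficient of v in shift_m(phi) is the coefficient of rotate1 v in phi.\<close>
definition shift_m :: "nat \<Rightarrow> ('n list \<Rightarrow> real) \<Rightarrow> ('n list \<Rightarrow> real)" where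
  "shift_m m \<phi> = (\<lambda>v. if length v = m then \<phi> (rotate1 v) else 0)"

definition path_concat :: "(real \<Rightarrow> real^'n) \<Rightarrow> (real \<Rightarrow> real^'n) \<Rightarrow> (real \<Rightarrow> real^'n)" where
  "path_concat A B = (\<lambda>t. if t \<le> 1/2 then A (2 * t) else B (2 * t - 1) - B 0 + A 1)"

definition conjugation_invariant :: "nat \<Rightarrow> ('n::finite list \<Rightarrow> real) \<Rightarrow> bool" where
  "conjugation_invariant m \<phi> \<longleftrightarrow>
     (\<forall>A B :: real \<Rightarrow> real^'n. piecewise_smooth_path A \<longrightarrow> piecewise_smooth_path B \<longrightarrow>
        sig_pair m A \<phi> = sig_pair m (path_concat (path_concat B A) (reversepath B)) \<phi>)"

end

theory Submission
  imports Defs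
begin

text \<open>Conjugate a path A by a short straight segment B = \<epsilon> e_j. By Chen's identity,
  \<langle>S(B \<squnion> A \<squnion> B\<inverse>), \<phi>\<rangle> is a polynomial in \<epsilon> whose linear coefficient is
  \<langle>S(A), \<psi>\<rangle> with \<psi>(u) = \<phi>(j u) - \<phi>(u j). Conjugation invariance makes this polynomial
  constant, so \<langle>S(A), \<psi>\<rangle> = 0 for every path A. A functional that vanishes on all signatures
  is zero: appending a segment \<epsilon> e_j to A and differentiating at \<epsilon> = 0 turns
  \<langle>S(A \<squnion> B), \<rho>\<rangle> into \<langle>S(A), \<rho>(\<cdot> j)\<rangle>, which gives an induction on the word length.
  Hence \<psi> = 0, which is \<phi> = shift_m(\<phi>).\<close>

section \<open>Straight segments\<close>

definition segment_path :: "'a::real_vector \<Rightarrow> 'a \<Rightarrow> real \<Rightarrow> 'a" where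
  "segment_path p v = (\<lambda>t. p + t *\<^sub>R v)"

definition segment_sig :: "real^'n \<Rightarrow> 'n list \<Rightarrow> real" where
  "segment_sig v ws = prod_list (map (\<lambda>i. v $ i) ws) / fact (length ws)"

lemma segment_path_has_vector_derivative:
  fixes p v :: "'a::real_normed_vector"
  shows "(segment_path p v has_vector_derivative v) (at s)"
  unfolding segment_path_def by (auto intro!: derivative_eq_intros)

lemma vector_derivative_segment_path [simp]:
  fixes p v :: "'a::real_normed_vector"
  shows "vector_derivative (segment_path p v) (at s) = v"
  by (rule vector_derivative_at[OF segment_path_has_vector_derivative])

lemma piecewise_smooth_segment_path: "piecewise_smooth_path (segment_path p v)"
proof -
  have "segment_path p v = linepath p (p + v)"
    by (auto simp: segment_path_def linepath_def fun_eq_iff algebra_simps)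
  then show ?thesis
    using valid_path_linepath unfolding piecewise_smooth_path_def valid_path_def by metis
qed

lemma reversepath_segment_path: "reversepath (segment_path p v) = segment_path (p + v) (- v)"
  by (auto simp: reversepath_def segment_path_def fun_eq_iff algebra_simps)

lemma segment_sig_Nil [simp]: "segment_sig v [] = 1"
  by (simp add: segment_sig_def)

lemma segment_sig_single [simp]: "segment_sig v [i] = v $ i"
  by (simp add: segment_sig_def)

lemma segment_sig_scaleR: "segment_sig (a *\<^sub>R v) ws = a ^ length ws * segment_sig v ws"
proof -
  have "prod_list (map (\<lambda>i. (a *\<^sub>R v) $ i) ws) = a ^ length ws * prod_list (map (\<lambda>i. v $ i) ws)"
    by (induction ws) auto
  then show ?thesis by (simp add: segment_sig_def)
qed

lemma has_integral_power_from_0: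
  fixes t :: real
  assumes "0 \<le> t"
  shows "((\<lambda>s. s ^ n) has_integral t ^ Suc n / Suc n) {0..t}"
proof -
  have "((\<lambda>s. s ^ Suc n / Suc n) has_real_derivative x ^ n) (at x)" for x :: real
    using DERIV_cdivide[OF DERIV_pow[of "Suc n" x], of "Suc n"] by (simp del: of_nat_Suc)
  then have "((\<lambda>s. s ^ n) has_integral t ^ Suc n / Suc n - 0 ^ Suc n / Suc n) {0..t}"
    by (intro fundamental_theorem_of_calculus[OF assms])
       (simp add: has_real_derivative_iff_has_vector_derivative has_vector_derivative_at_within)
  then show ?thesis by simp
qed

lemma sig_rev_segment_path:
  assumes "0 \<le> t"
  shows "sig_rev (segment_path p v) ws t = t ^ length ws * segment_sig v ws"
  using assms
proof (induction ws arbitrary: t)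
  case Nil
  then show ?case by simp
next
  case (Cons i ws)
  have "sig_rev (segment_path p v) (i # ws) t
          = integral {0..t} (\<lambda>s. s ^ length ws * (segment_sig v ws * v $ i))"
    unfolding sig_rev.simps by (rule integral_cong) (simp add: Cons.IH)
  also have "\<dots> = t ^ Suc (length ws) / Suc (length ws) * (segment_sig v ws * v $ i)"
    using has_integral_mult_left[OF has_integral_power_from_0[OF Cons.prems]] by (rule integral_unique)
  also have "\<dots> = t ^ length (i # ws) * segment_sig v (i # ws)"
    by (simp add: segment_sig_def field_simps)
  finally show ?case .
qed

lemma sig_rev_segment_path_at_1 [simp]: "sig_rev (segment_path p v) ws 1 = segment_sig v ws"
  by (simp add: sig_rev_segment_path)

section \<open>Chen's identity\<close>

text \<open>Chen's identity is proved for the following class of paths rather than for all piecewise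
  smooth ones: it contains the segments and is closed under concatenation, which is all the
  argument needs, and it has the integrability of the iterated integrands built in.\<close>

definition sig_regular :: "(real \<Rightarrow> real^'n) \<Rightarrow> bool" where
  "sig_regular X \<longleftrightarrow> (\<exists>S. finite S \<and> (\<forall>s\<in>{0<..<1} - S. X differentiable (at s))) \<and>
     (\<forall>ws i t. 0 \<le> t \<and> t \<le> 1 \<longrightarrow>
        (\<lambda>s. sig_rev X ws s * vector_derivative X (at s) $ i) integrable_on {0..t})"

lemma sig_regular_has_integral:
  assumes "sig_regular X" "0 \<le> t" "t \<le> 1"
  shows "((\<lambda>s. sig_rev X ws s * vector_derivative X (at s) $ i) has_integral sig_rev X (i # ws) t) {0..t}"
  using assms unfolding sig_regular_def by (auto intro!: integrable_integral)

lemma sig_regular_segment_path: "sig_regular (segment_path p v)"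
  unfolding sig_regular_def
proof (intro conjI allI impI)
  show "\<exists>S. finite S \<and> (\<forall>s\<in>{0<..<1} - S. segment_path p v differentiable at s)"
    using segment_path_has_vector_derivative by (metis differentiableI_vector finite.emptyI)
  fix ws i and t :: real
  assume "0 \<le> t \<and> t \<le> 1"
  then have "((\<lambda>s. s ^ length ws * (segment_sig v ws * v $ i)) has_integral
               t ^ Suc (length ws) / Suc (length ws) * (segment_sig v ws * v $ i)) {0..t}"
    by (intro has_integral_mult_left has_integral_power_from_0) auto
  then show "(\<lambda>s. sig_rev (segment_path p v) ws s * vector_derivative (segment_path p v) (at s) $ i)
               integrable_on {0..t}"
    by (rule has_integral_integrable[OF has_integral_spike_finite[where S="{}"], rotated 2])
       (auto simp: sig_rev_segment_path)
qed

lemma has_integral_first_half: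
  fixes h :: "real \<Rightarrow> real"
  assumes "(h has_integral I) {0..2 * t}"
  shows "((\<lambda>x. 2 * h (2 * x)) has_integral I) {0..t}"
proof -
  have "((\<lambda>x. h (2 *\<^sub>R x + 0)) has_integral I /\<^sub>R 2 ^ DIM(real))
          (cbox ((0 - 0) /\<^sub>R 2) ((2 * t - 0) /\<^sub>R 2))"
    using assms by (intro has_integral_affinity') auto
  then show ?thesis
    using has_integral_mult_right[of _ "I / 2" _ 2] by simp
qed

lemma has_integral_second_half:
  fixes h :: "real \<Rightarrow> real"
  assumes "(h has_integral I) {0..2 * t - 1}"
  shows "((\<lambda>x. 2 * h (2 * x - 1)) has_integral I) {1/2..t}"
proof -
  have "((\<lambda>x. h (2 *\<^sub>R x + (-1))) has_integral I /\<^sub>R 2 ^ DIM(real))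
          (cbox ((0 - (-1)) /\<^sub>R 2) ((2 * t - 1 - (-1)) /\<^sub>R 2))"
    using assms by (intro has_integral_affinity') auto
  then show ?thesis
    using has_integral_mult_right[of _ "I / 2" _ 2] by simp
qed

lemma path_concat_has_vector_derivative_first_half:
  assumes "s < 1/2" "A differentiable at (2 * s)"
  shows "(path_concat A B has_vector_derivative 2 *\<^sub>R vector_derivative A (at (2 * s))) (at s)"
proof -
  have "((A \<circ> (\<lambda>x. 2 * x)) has_vector_derivative 2 *\<^sub>R vector_derivative A (at (2 * s))) (at s)"
    using assms(2)
    by (intro vector_diff_chain_at)
       (auto intro!: derivative_eq_intros vector_derivative_works[THEN iffD1]
             simp flip: has_real_derivative_iff_has_vector_derivative)
  then show ?thesis
    by (rule has_vector_derivative_transform_within_open[where S="{..<1/2}"])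
       (use assms(1) in \<open>auto simp: path_concat_def\<close>)
qed

lemma path_concat_has_vector_derivative_second_half:
  assumes "1/2 < s" "B differentiable at (2 * s - 1)"
  shows "(path_concat A B has_vector_derivative 2 *\<^sub>R vector_derivative B (at (2 * s - 1))) (at s)"
proof -
  have "((B \<circ> (\<lambda>x. 2 * x - 1)) has_vector_derivative 2 *\<^sub>R vector_derivative B (at (2 * s - 1))) (at s)"
    using assms(2)
    by (intro vector_diff_chain_at)
       (auto intro!: derivative_eq_intros vector_derivative_works[THEN iffD1]
             simp flip: has_real_derivative_iff_has_vector_derivative)
  then have "((\<lambda>x. (B \<circ> (\<lambda>x. 2 * x - 1)) x + (A 1 - B 0)) has_vector_derivative
               2 *\<^sub>R vector_derivative B (at (2 * s - 1))) (at s)"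
    by (auto intro!: derivative_eq_intros simp: o_def)
  then show ?thesis
    by (rule has_vector_derivative_transform_within_open[where S="{1/2<..}"])
       (use assms(1) in \<open>auto simp: path_concat_def\<close>)
qed

lemma path_concat_differentiable_off_finite:
  assumes "sig_regular A" "sig_regular B"
  shows "\<exists>E. finite E \<and> (\<forall>s\<in>{0..1} - E.
           s < 1/2 \<and> A differentiable at (2 * s) \<or> 1/2 < s \<and> B differentiable at (2 * s - 1))"
proof -
  obtain SA where SA: "finite SA" "\<And>s. s \<in> {0<..<1} - SA \<Longrightarrow> A differentiable (at s)"
    using assms(1) unfolding sig_regular_def by blast
  obtain SB where SB: "finite SB" "\<And>s. s \<in> {0<..<1} - SB \<Longrightarrow> B differentiable (at s)"
    using assms(2) unfolding sig_regular_def by blast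
  let ?E = "{0, 1/2, 1} \<union> (\<lambda>x. x / 2) ` SA \<union> (\<lambda>x. (x + 1) / 2) ` SB"
  have "s < 1/2 \<and> A differentiable at (2 * s) \<or> 1/2 < s \<and> B differentiable at (2 * s - 1)"
    if s: "s \<in> {0..1} - ?E" for s
  proof -
    have "2 * s \<notin> SA"
    proof
      assume "2 * s \<in> SA"
      then have "s \<in> (\<lambda>x. x / 2) ` SA"
        by (rule rev_image_eqI) simp
      with s show False by blast
    qed
    moreover have "2 * s - 1 \<notin> SB"
    proof
      assume "2 * s - 1 \<in> SB"
      then have "s \<in> (\<lambda>x. (x + 1) / 2) ` SB"
        by (rule rev_image_eqI) simp
      with s show False by blast
    qed
    ultimately show ?thesis
      using s SA(2)[of "2 * s"] SB(2)[of "2 * s - 1"] by (cases "s < 1/2") auto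
  qed
  moreover have "finite ?E"
    using SA(1) SB(1) by simp
  ultimately show ?thesis
    by (intro exI[of _ ?E]) simp
qed

text \<open>The iterated integrals of the concatenation at time t, as predicted by Chen's identity:
  on the first half only A has been traversed (at double speed), on the second half all of A
  and the part of B up to time 2t - 1.\<close>

definition chen_sig_rev :: "(real \<Rightarrow> real^'n) \<Rightarrow> (real \<Rightarrow> real^'n) \<Rightarrow> 'n list \<Rightarrow> real \<Rightarrow> real" where
  "chen_sig_rev A B ws t = (if t \<le> 1/2 then sig_rev A ws (2 * t)
     else (\<Sum>k\<le>length ws. sig_rev B (take k ws) (2 * t - 1) * sig_rev A (drop k ws) 1))"

lemma has_integral_path_concat_first_half:
  assumes A: "sig_regular A" and B: "sig_regular B"
    and IH: "\<And>s. s \<in> {0..1} \<Longrightarrow> sig_rev (path_concat A B) ws s = chen_sig_rev A B ws s"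
    and t: "0 \<le> t" "t \<le> 1/2"
  shows "((\<lambda>s. sig_rev (path_concat A B) ws s * vector_derivative (path_concat A B) (at s) $ i)
           has_integral sig_rev A (i # ws) (2 * t)) {0..t}"
proof -
  obtain E where E: "finite E" "\<forall>s\<in>{0..1} - E.
      s < 1/2 \<and> A differentiable at (2 * s) \<or> 1/2 < s \<and> B differentiable at (2 * s - 1)"
    using path_concat_differentiable_off_finite[OF A B] by blast
  have "((\<lambda>x. 2 * (sig_rev A ws (2 * x) * vector_derivative A (at (2 * x)) $ i))
          has_integral sig_rev A (i # ws) (2 * t)) {0..t}"
    by (rule has_integral_first_half) (use t sig_regular_has_integral[OF A] in auto)
  then show ?thesis
  proof (rule has_integral_spike_finite[OF E(1), rotated])
    fix s
    assume s: "s \<in> {0..t} - E"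
    then have "s < 1/2" "A differentiable at (2 * s)"
      using E(2)[rule_format, of s] t by auto
    then have "vector_derivative (path_concat A B) (at s) = 2 *\<^sub>R vector_derivative A (at (2 * s))"
      by (intro vector_derivative_at path_concat_has_vector_derivative_first_half)
    then show "sig_rev (path_concat A B) ws s * vector_derivative (path_concat A B) (at s) $ i
                 = 2 * (sig_rev A ws (2 * s) * vector_derivative A (at (2 * s)) $ i)"
      using IH[of s] s t \<open>s < 1/2\<close> by (simp add: chen_sig_rev_def)
  qed
qed

lemma has_integral_path_concat_second_half:
  assumes A: "sig_regular A" and B: "sig_regular B"
    and IH: "\<And>s. s \<in> {0..1} \<Longrightarrow> sig_rev (path_concat A B) ws s = chen_sig_rev A B ws s"
    and t: "1/2 \<le> t" "t \<le> 1"
  shows "((\<lambda>s. sig_rev (path_concat A B) ws s * vector_derivative (path_concat A B) (at s) $ i)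
           has_integral (\<Sum>k\<le>length ws. sig_rev A (drop k ws) 1 * sig_rev B (i # take k ws) (2 * t - 1)))
         {1/2..t}"
proof -
  obtain E where E: "finite E" "\<forall>s\<in>{0..1} - E.
      s < 1/2 \<and> A differentiable at (2 * s) \<or> 1/2 < s \<and> B differentiable at (2 * s - 1)"
    using path_concat_differentiable_off_finite[OF A B] by blast
  let ?g = "\<lambda>k x. sig_rev A (drop k ws) 1 *
              (2 * (sig_rev B (take k ws) (2 * x - 1) * vector_derivative B (at (2 * x - 1)) $ i))"
  have "((\<lambda>x. \<Sum>k\<le>length ws. ?g k x) has_integral
          (\<Sum>k\<le>length ws. sig_rev A (drop k ws) 1 * sig_rev B (i # take k ws) (2 * t - 1))) {1/2..t}"
    using t sig_regular_has_integral[OF B]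
    by (intro has_integral_sum has_integral_mult_right has_integral_second_half) auto
  then show ?thesis
  proof (rule has_integral_spike_finite[OF E(1), rotated])
    fix s
    assume s: "s \<in> {1/2..t} - E"
    then have "1/2 < s" "B differentiable at (2 * s - 1)"
      using E(2)[rule_format, of s] t by auto
    then have "vector_derivative (path_concat A B) (at s)
                 = 2 *\<^sub>R vector_derivative B (at (2 * s - 1))"
      by (intro vector_derivative_at path_concat_has_vector_derivative_second_half)
    then show "sig_rev (path_concat A B) ws s * vector_derivative (path_concat A B) (at s) $ i
                 = (\<Sum>k\<le>length ws. ?g k s)"
      using IH[of s] s t \<open>1/2 < s\<close>
      by (simp add: chen_sig_rev_def sum_distrib_left sum_distrib_right algebra_simps)
  qed
qed

lemma has_integral_path_concat:
  assumes A: "sig_regular A" and B: "sig_regular B"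
    and IH: "\<And>s. s \<in> {0..1} \<Longrightarrow> sig_rev (path_concat A B) ws s = chen_sig_rev A B ws s"
    and t: "0 \<le> t" "t \<le> 1"
  shows "((\<lambda>s. sig_rev (path_concat A B) ws s * vector_derivative (path_concat A B) (at s) $ i)
           has_integral chen_sig_rev A B (i # ws) t) {0..t}"
proof (cases "t \<le> 1/2")
  case True
  then show ?thesis
    using has_integral_path_concat_first_half[OF A B IH] t by (simp add: chen_sig_rev_def)
next
  case False
  have "((\<lambda>s. sig_rev (path_concat A B) ws s * vector_derivative (path_concat A B) (at s) $ i)
          has_integral sig_rev A (i # ws) 1 +
            (\<Sum>k\<le>length ws. sig_rev A (drop k ws) 1 * sig_rev B (i # take k ws) (2 * t - 1))) {0..t}"
    using has_integral_path_concat_first_half[OF A B IH, of "1/2"]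
      has_integral_path_concat_second_half[OF A B IH, of t] t False
    by (intro has_integral_combine[of 0 "1/2" t]) auto
  moreover have "chen_sig_rev A B (i # ws) t = sig_rev A (i # ws) 1 +
      (\<Sum>k\<le>length ws. sig_rev A (drop k ws) 1 * sig_rev B (i # take k ws) (2 * t - 1))"
    using False unfolding chen_sig_rev_def
    by (simp only: if_False length_Cons sum.atMost_Suc_shift)
       (simp add: mult.commute del: sig_rev.simps(2))
  ultimately show ?thesis by simp
qed

lemma sig_rev_path_concat_eq_chen_sig_rev:
  assumes A: "sig_regular A" and B: "sig_regular B" and "s \<in> {0..1}"
  shows "sig_rev (path_concat A B) ws s = chen_sig_rev A B ws s"
  using assms(3)
proof (induction ws arbitrary: s)
  case Nil
  then show ?case by (simp add: chen_sig_rev_def)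
next
  case (Cons i ws)
  then show ?case
    using has_integral_path_concat[OF A B Cons.IH] by (simp add: integral_unique)
qed

text \<open>The word ws is reversed, so its first k letters are the last k letters of the word,
  read along B.\<close>

lemma sig_rev_path_concat:
  assumes "sig_regular A" "sig_regular B"
  shows "sig_rev (path_concat A B) ws 1 = (\<Sum>k\<le>length ws. sig_rev B (take k ws) 1 * sig_rev A (drop k ws) 1)"
  using sig_rev_path_concat_eq_chen_sig_rev[OF assms, of 1 ws] by (simp add: chen_sig_rev_def)

lemma sig_regular_path_concat:
  assumes A: "sig_regular A" and B: "sig_regular B"
  shows "sig_regular (path_concat A B)"
  unfolding sig_regular_def
proof (intro conjI allI impI)
  obtain E where E: "finite E" "\<forall>s\<in>{0..1} - E.
      s < 1/2 \<and> A differentiable at (2 * s) \<or> 1/2 < s \<and> B differentiable at (2 * s - 1)"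
    using path_concat_differentiable_off_finite[OF A B] by blast
  have "path_concat A B differentiable (at s)" if "s \<in> {0<..<1} - E" for s
    using E(2)[rule_format, of s] that path_concat_has_vector_derivative_first_half
      path_concat_has_vector_derivative_second_half differentiableI_vector
    by fastforce
  then show "\<exists>S. finite S \<and> (\<forall>s\<in>{0<..<1} - S. path_concat A B differentiable (at s))"
    using E(1) by blast
next
  fix ws i and t :: real
  assume "0 \<le> t \<and> t \<le> 1"
  then show "(\<lambda>s. sig_rev (path_concat A B) ws s * vector_derivative (path_concat A B) (at s) $ i)
               integrable_on {0..t}"
    using has_integral_path_concat[OF A B sig_rev_path_concat_eq_chen_sig_rev[OF A B]] by blast
qed


lemma piecewise_smooth_path_concat:
  assumes "piecewise_smooth_path A" "piecewise_smooth_path B"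
  shows "piecewise_smooth_path (path_concat A B)"
proof -
  have "path_concat A B = A +++ (\<lambda>t. B t - (B 0 - A 1))"
    by (auto simp: path_concat_def joinpaths_def fun_eq_iff algebra_simps)
  moreover have "valid_path (\<lambda>t. B t - (B 0 - A 1))"
    using assms(2) valid_path_offset unfolding piecewise_smooth_path_def valid_path_def by blast
  moreover have "pathfinish A = pathstart (\<lambda>t. B t - (B 0 - A 1))"
    by (simp add: pathfinish_def pathstart_def)
  ultimately show ?thesis
    using assms valid_path_join unfolding piecewise_smooth_path_def valid_path_def by metis
qed

section \<open>First variations of the signature\<close>

lemma sum_words_length_Suc_cons:
  "(\<Sum>w\<in>{w::'n::finite list. length w = Suc n}. f w) = (\<Sum>x\<in>UNIV. \<Sum>u\<in>{u. length u = n}. f (x # u))"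
proof -
  have "(\<Sum>x\<in>UNIV. \<Sum>u\<in>{u. length u = n}. f (x # u)) = (\<Sum>(x, u)\<in>UNIV \<times> {u. length u = n}. f (x # u))"
    by (rule sum.cartesian_product)
  also have "\<dots> = (\<Sum>w\<in>{w. length w = Suc n}. f w)"
    by (rule sum.reindex_bij_witness[of _ "\<lambda>w. (hd w, tl w)" "\<lambda>(x, u). x # u"])
       (auto simp: length_Suc_conv)
  finally show ?thesis ..
qed

lemma sum_words_length_Suc_snoc:
  "(\<Sum>w\<in>{w::'n::finite list. length w = Suc n}. f w) = (\<Sum>x\<in>UNIV. \<Sum>u\<in>{u. length u = n}. f (u @ [x]))"
proof -
  have "(\<Sum>x\<in>UNIV. \<Sum>u\<in>{u. length u = n}. f (u @ [x])) = (\<Sum>(x, u)\<in>UNIV \<times> {u. length u = n}. f (u @ [x]))"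
    by (rule sum.cartesian_product)
  also have "\<dots> = (\<Sum>w\<in>{w. length w = Suc n}. f w)"
    by (rule sum.reindex_bij_witness[of _ "\<lambda>w. (last w, butlast w)" "\<lambda>(x, u). u @ [x]"])
       (auto simp: length_Suc_conv_rev)
  finally show ?thesis ..
qed

lemma sum_axis_mult:
  fixes g :: "'n::finite \<Rightarrow> 'a::semiring_1"
  shows "(\<Sum>x\<in>UNIV. axis j 1 $ x * g x) = g j"
proof -
  have "axis j 1 $ x * g x = (if x = j then g j else 0)" for x
    by (simp add: axis_def)
  then show ?thesis by simp
qed

lemma has_real_derivative_monomial_at_0:
  "((\<lambda>x::real. x ^ n * c) has_real_derivative (if n = 1 then c else 0)) (at 0)"
proof -
  have "((\<lambda>x::real. x ^ n * c) has_real_derivative real n * 0 ^ (n - Suc 0) * c) (at 0)"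
    by (intro DERIV_cmult_right DERIV_pow)
  moreover have "real n * 0 ^ (n - Suc 0) * c = (if n = 1 then c else 0)"
    by (cases n) auto
  ultimately show ?thesis by simp
qed

lemma sum_triangle_exponent_one:
  fixes c :: "nat \<Rightarrow> nat \<Rightarrow> 'a::comm_monoid_add"
  shows "(\<Sum>k\<le>Suc n. \<Sum>l\<le>Suc n - k. if k + (Suc n - k - l) = 1 then c k l else 0) = c 0 n + c 1 n"
proof -
  have "(\<Sum>l\<le>Suc n - k. if k + (Suc n - k - l) = 1 then c k l else 0) = (if k \<le> 1 then c k n else 0)"
    if "k \<le> Suc n" for k
  proof -
    have "(\<Sum>l\<le>Suc n - k. if k + (Suc n - k - l) = 1 then c k l else 0)
            = (\<Sum>l\<le>Suc n - k. if l = n then c k l else 0)"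
      by (rule sum.cong) (use that in auto)
    then show ?thesis
      using that by simp arith
  qed
  then have "(\<Sum>k\<le>Suc n. \<Sum>l\<le>Suc n - k. if k + (Suc n - k - l) = 1 then c k l else 0)
               = (\<Sum>k\<le>Suc n. if k \<le> 1 then c k n else 0)"
    by simp
  also have "\<dots> = (\<Sum>k\<in>{0, 1}. c k n)"
    by (rule sum.mono_neutral_cong_right) auto
  finally show ?thesis
    by simp
qed

lemma sig_coeff_append_segment_has_derivative:
  assumes X: "sig_regular X"
  shows "((\<lambda>\<epsilon>. sig_coeff (path_concat X (segment_path p (\<epsilon> *\<^sub>R v))) (u @ [x]))
           has_real_derivative v $ x * sig_coeff X u) (at 0)"
proof -
  let ?ws = "x # rev u"
  let ?c = "\<lambda>k. segment_sig v (take k ?ws) * sig_rev X (drop k ?ws) 1"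
  have poly: "sig_coeff (path_concat X (segment_path p (\<epsilon> *\<^sub>R v))) (u @ [x])
                = (\<Sum>k\<le>Suc (length u). \<epsilon> ^ k * ?c k)" for \<epsilon>
  proof -
    have "sig_coeff (path_concat X (segment_path p (\<epsilon> *\<^sub>R v))) (u @ [x])
            = (\<Sum>k\<le>Suc (length u). segment_sig (\<epsilon> *\<^sub>R v) (take k ?ws) * sig_rev X (drop k ?ws) 1)"
      by (simp add: sig_coeff_def sig_rev_path_concat[OF X sig_regular_segment_path] del: sig_rev.simps)
    also have "\<dots> = (\<Sum>k\<le>Suc (length u). \<epsilon> ^ k * ?c k)"
      by (intro sum.cong refl) (auto simp: segment_sig_scaleR min_def)
    finally show ?thesis .
  qed
  have "((\<lambda>\<epsilon>. \<Sum>k\<le>Suc (length u). \<epsilon> ^ k * ?c k) has_real_derivative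
          (\<Sum>k\<le>Suc (length u). if k = 1 then ?c k else 0)) (at 0)"
    by (intro DERIV_sum has_real_derivative_monomial_at_0)
  moreover have "(\<Sum>k\<le>Suc (length u). if k = 1 then ?c k else 0) = v $ x * sig_coeff X u"
    by (auto simp: sig_coeff_def Suc_le_eq)
  ultimately show ?thesis
    by (simp only: poly)
qed

lemma sig_coeff_conj_segment_has_derivative:
  assumes A: "sig_regular A" and "w \<noteq> []"
  shows "((\<lambda>\<epsilon>. sig_coeff (path_concat (path_concat (segment_path p (\<epsilon> *\<^sub>R v)) A)
                                 (reversepath (segment_path p (\<epsilon> *\<^sub>R v)))) w)
           has_real_derivative v $ hd w * sig_coeff A (tl w) - v $ last w * sig_coeff A (butlast w)) (at 0)"
proof -
  obtain n where n: "length w = Suc n"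
    using \<open>w \<noteq> []\<close> by (cases w) auto
  let ?ws = "rev w"
  let ?c = "\<lambda>k l. (-1) ^ k * segment_sig v (take k ?ws) * sig_rev A (take l (drop k ?ws)) 1
                   * segment_sig v (drop l (drop k ?ws))"
  have poly: "sig_coeff (path_concat (path_concat (segment_path p (\<epsilon> *\<^sub>R v)) A)
                  (reversepath (segment_path p (\<epsilon> *\<^sub>R v)))) w
                = (\<Sum>k\<le>Suc n. \<Sum>l\<le>Suc n - k. \<epsilon> ^ (k + (Suc n - k - l)) * ?c k l)" for \<epsilon>
  proof -
    have "sig_coeff (path_concat (path_concat (segment_path p (\<epsilon> *\<^sub>R v)) A)
            (reversepath (segment_path p (\<epsilon> *\<^sub>R v)))) w
          = (\<Sum>k\<le>Suc n. \<Sum>l\<le>Suc n - k. segment_sig ((- \<epsilon>) *\<^sub>R v) (take k ?ws)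
               * (sig_rev A (take l (drop k ?ws)) 1 * segment_sig (\<epsilon> *\<^sub>R v) (drop l (drop k ?ws))))"
      by (simp add: sig_coeff_def reversepath_segment_path n sum_distrib_left
          sig_rev_path_concat[OF sig_regular_path_concat sig_regular_segment_path]
          sig_rev_path_concat[OF sig_regular_segment_path A] sig_regular_segment_path A
          del: sig_rev.simps)
    also have "\<dots> = (\<Sum>k\<le>Suc n. \<Sum>l\<le>Suc n - k. \<epsilon> ^ (k + (Suc n - k - l)) * ?c k l)"
    proof (intro sum.cong refl)
      fix k l
      assume "k \<in> {..Suc n}" "l \<in> {..Suc n - k}"
      then have "length (take k ?ws) = k" "length (drop l (drop k ?ws)) = Suc n - k - l"
        using n by auto
      then show "segment_sig ((- \<epsilon>) *\<^sub>R v) (take k ?ws)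
                   * (sig_rev A (take l (drop k ?ws)) 1 * segment_sig (\<epsilon> *\<^sub>R v) (drop l (drop k ?ws)))
                 = \<epsilon> ^ (k + (Suc n - k - l)) * ?c k l"
        by (simp only: segment_sig_scaleR power_add power_minus[of \<epsilon>] mult_ac)
    qed
    finally show ?thesis .
  qed
  have "((\<lambda>\<epsilon>. \<Sum>k\<le>Suc n. \<Sum>l\<le>Suc n - k. \<epsilon> ^ (k + (Suc n - k - l)) * ?c k l) has_real_derivative
          (\<Sum>k\<le>Suc n. \<Sum>l\<le>Suc n - k. if k + (Suc n - k - l) = 1 then ?c k l else 0)) (at 0)"
    by (intro DERIV_sum has_real_derivative_monomial_at_0)
  \<comment> \<open>The only monomials of degree one: the first letter of w read along the segment and the
    rest along A, or the last letter read along the reversed segment.\<close>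
  moreover have "?c 0 n = v $ hd w * sig_coeff A (tl w)"
    using n by (cases w) (simp_all add: sig_coeff_def del: sig_rev.simps)
  moreover have "?c 1 n = - (v $ last w * sig_coeff A (butlast w))"
    using n by (cases w rule: rev_cases) (simp_all add: sig_coeff_def del: sig_rev.simps)
  ultimately show ?thesis
    by (simp only: poly sum_triangle_exponent_one diff_conv_add_uminus)
qed

lemma sig_pair_conj_segment_has_derivative:
  fixes \<phi> :: "'n::finite list \<Rightarrow> real"
  assumes A: "sig_regular A"
  shows "((\<lambda>\<epsilon>. sig_pair (Suc n) (path_concat (path_concat (segment_path p (\<epsilon> *\<^sub>R v)) A)
                                     (reversepath (segment_path p (\<epsilon> *\<^sub>R v)))) \<phi>)
           has_real_derivative
             (\<Sum>u\<in>{u. length u = n}. sig_coeff A u * (\<Sum>x\<in>UNIV. v $ x * (\<phi> (x # u) - \<phi> (u @ [x])))))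
         (at 0)"
proof -
  let ?D = "\<lambda>w. v $ hd w * sig_coeff A (tl w) - v $ last w * sig_coeff A (butlast w)"
  have "((\<lambda>\<epsilon>. sig_pair (Suc n) (path_concat (path_concat (segment_path p (\<epsilon> *\<^sub>R v)) A)
                                  (reversepath (segment_path p (\<epsilon> *\<^sub>R v)))) \<phi>)
          has_real_derivative (\<Sum>w\<in>{w. length w = Suc n}. ?D w * \<phi> w)) (at 0)"
    unfolding sig_pair_def
    by (intro DERIV_sum DERIV_cmult_right sig_coeff_conj_segment_has_derivative A) auto
  moreover have "(\<Sum>w\<in>{w. length w = Suc n}. ?D w * \<phi> w)
      = (\<Sum>w\<in>{w. length w = Suc n}. v $ hd w * sig_coeff A (tl w) * \<phi> w)
        - (\<Sum>w\<in>{w. length w = Suc n}. v $ last w * sig_coeff A (butlast w) * \<phi> w)"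
    by (simp add: left_diff_distrib sum_subtractf)
  moreover have "(\<Sum>w\<in>{w. length w = Suc n}. v $ hd w * sig_coeff A (tl w) * \<phi> w)
      = (\<Sum>u\<in>{u. length u = n}. \<Sum>x\<in>UNIV. v $ x * sig_coeff A u * \<phi> (x # u))"
    by (subst sum_words_length_Suc_cons) (simp add: sum.swap[of _ UNIV])
  moreover have "(\<Sum>w\<in>{w. length w = Suc n}. v $ last w * sig_coeff A (butlast w) * \<phi> w)
      = (\<Sum>u\<in>{u. length u = n}. \<Sum>x\<in>UNIV. v $ x * sig_coeff A u * \<phi> (u @ [x]))"
    by (subst sum_words_length_Suc_snoc) (simp add: sum.swap[of _ UNIV])
  ultimately show ?thesis
    by (simp add: sum_distrib_left right_diff_distrib sum_subtractf mult_ac)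
qed

section \<open>Separation by signatures\<close>

lemma eq_0_if_orthogonal_to_signatures:
  fixes \<rho> :: "'n::finite list \<Rightarrow> real"
  assumes "\<And>X. sig_regular X \<Longrightarrow> piecewise_smooth_path X \<Longrightarrow>
             (\<Sum>u\<in>{u. length u = n}. sig_coeff X u * \<rho> u) = 0"
    and "length u = n"
  shows "\<rho> u = 0"
  using assms
proof (induction n arbitrary: \<rho> u)
  case 0
  have "{u::'n list. length u = 0} = {[]}"
    by auto
  then show ?case
    using "0.prems"(1)[OF sig_regular_segment_path piecewise_smooth_segment_path] "0.prems"(2)
    by (simp add: sig_coeff_def)
next
  case (Suc n)
  obtain u' j where u: "u = u' @ [j]" "length u' = n"
    using Suc.prems(2) by (metis length_Suc_conv_rev)
  have "\<rho> (u' @ [j]) = 0"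
  proof (rule Suc.IH[of "\<lambda>u. \<rho> (u @ [j])", OF _ u(2)])
    fix X :: "real \<Rightarrow> real^'n"
    assume X: "sig_regular X" "piecewise_smooth_path X"
    let ?Y = "\<lambda>\<epsilon>. path_concat X (segment_path 0 (\<epsilon> *\<^sub>R axis j 1))"
    have "(\<Sum>w\<in>{w. length w = Suc n}. sig_coeff (?Y \<epsilon>) w * \<rho> w) = 0" for \<epsilon>
      by (intro Suc.prems(1) sig_regular_path_concat piecewise_smooth_path_concat X
          sig_regular_segment_path piecewise_smooth_segment_path)
    then have const: "(\<lambda>\<epsilon>. \<Sum>x\<in>UNIV. \<Sum>u\<in>{u. length u = n}. sig_coeff (?Y \<epsilon>) (u @ [x]) * \<rho> (u @ [x]))
                 = (\<lambda>_. 0)"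
      by (simp only: sum_words_length_Suc_snoc)
    have "((\<lambda>\<epsilon>. \<Sum>x\<in>UNIV. \<Sum>u\<in>{u. length u = n}. sig_coeff (?Y \<epsilon>) (u @ [x]) * \<rho> (u @ [x]))
        has_real_derivative
          (\<Sum>x\<in>UNIV. \<Sum>u\<in>{u. length u = n}. axis j 1 $ x * sig_coeff X u * \<rho> (u @ [x]))) (at 0)"
      by (intro DERIV_sum DERIV_cmult_right sig_coeff_append_segment_has_derivative X(1))
    then have "(\<Sum>x\<in>UNIV. \<Sum>u\<in>{u. length u = n}. axis j 1 $ x * sig_coeff X u * \<rho> (u @ [x])) = 0"
      unfolding const using DERIV_const by (rule DERIV_unique)
    moreover have "(\<Sum>x\<in>UNIV. \<Sum>u\<in>{u. length u = n}. axis j 1 $ x * sig_coeff X u * \<rho> (u @ [x]))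
                     = (\<Sum>u\<in>{u. length u = n}. sig_coeff X u * \<rho> (u @ [j]))"
      by (subst sum.swap) (simp add: mult.assoc sum_axis_mult)
    ultimately show "(\<Sum>u\<in>{u. length u = n}. sig_coeff X u * \<rho> (u @ [j])) = 0"
      by simp
  qed
  then show ?case
    using u(1) by simp
qed

theorem mainTheorem5:
  fixes \<phi> :: "'n::finite list \<Rightarrow> real" and m :: nat
  assumes "in_Tm m \<phi>"
    and "conjugation_invariant m \<phi>"
  shows "\<phi> = shift_m m \<phi>"
proof -
  have "\<phi> (j # u) = \<phi> (u @ [j])" if m: "m = Suc (length u)" for j u
  proof -
    have "(\<Sum>w\<in>{w. length w = length u}. sig_coeff A w * (\<phi> (j # w) - \<phi> (w @ [j]))) = 0"
      if A: "sig_regular A" "piecewise_smooth_path A" for A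
    proof -
      let ?B = "\<lambda>\<epsilon>. segment_path 0 (\<epsilon> *\<^sub>R axis j 1)"
      have invariant: "sig_pair m (path_concat (path_concat (?B \<epsilon>) A) (reversepath (?B \<epsilon>))) \<phi>
                         = sig_pair m A \<phi>" for \<epsilon>
        using assms(2)[unfolded conjugation_invariant_def, rule_format, OF A(2) piecewise_smooth_segment_path]
        by (rule sym)
      have "((\<lambda>_. sig_pair m A \<phi>) has_real_derivative (\<Sum>w\<in>{w. length w = length u}.
          sig_coeff A w * (\<Sum>x\<in>UNIV. axis j 1 $ x * (\<phi> (x # w) - \<phi> (w @ [x]))))) (at 0)"
        using sig_pair_conj_segment_has_derivative[OF A(1), where n="length u" and p=0 and v="axis j 1"
            and \<phi>=\<phi>]
        unfolding m[symmetric] invariant .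
      from DERIV_unique[OF this DERIV_const] show ?thesis
        by (simp add: sum_axis_mult)
    qed
    then have "\<phi> (j # u) - \<phi> (u @ [j]) = 0"
      by (rule eq_0_if_orthogonal_to_signatures[where \<rho>="\<lambda>w. \<phi> (j # w) - \<phi> (w @ [j])"
            and n="length u" and u=u]) simp_all
    then show ?thesis
      by simp
  qed
  moreover have "\<phi> v = 0" if "length v \<noteq> m" for v
    using assms(1) that by (simp add: in_Tm_def)
  ultimately have "\<phi> v = shift_m m \<phi> v" for v
    by (cases v) (auto simp: shift_m_def)
  then show ?thesis ..
qed

end
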